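(* Let $k=\delta n$ with $\delta = \omega(\log^{-1/3} n)$, let $G = (X\dot\cup Y,E)$ be a $k$-regular bipartite graph on $2n$ vertices, let $(S,T)$ be a cut of $G$, and let $V' = V\setminus \Gamma(S,T)$. Let $G_1\sim G(p_1)$ with $p_1 = \frac{\log n - \log\log\log\log n}{k}$. Then, w.v.h.p., every $x\in V'$ satisfies $\deg^{\mathrm{Cr}}_{G_1}(x)\le 30$.
   Context: $V = X\cup Y$. A cut is a pair $(S,T)$ with $S\subseteq X$, $T\subseteq Y$; cross edges w.r.t. $(S,T)$ are edges joining $S$ to $Y\setminus T$ or $X\setminus S$ to $T$. $\deg^{\mathrm{Cr}}_{H}(x)$ denotes the number of cross edges of the subgraph $H$ incident to $x$. $\Gamma(S,T) = \{x\in V : \deg^{\mathrm{Cr}}_{G}(x) \ge n^{-1/20}k\}$. $G(p)$ retains each edge of $G$ independently with probability $p$. A sequence of events $A_n$ holds with very high probability (w.v.h.p.) if $\log(\mathbb P[A_n^c]) = -\Omega(\log n)$. *)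

theory Defs
  imports "HOL-Probability.Probability" "HOL-Library.Landau_Symbols"
begin

text \<open>A bipartite graph with sides X = {0..<n} and Y = {0..<n} (two disjoint labelled copies)
  is given by its edge set E, a set of pairs (x,y) with x in X, y in Y.\<close>

type_synonym vertex = "nat + nat"

definition bip_vertices :: "nat \<Rightarrow> vertex set" where
  "bip_vertices n = Inl ` {..<n} \<union> Inr ` {..<n}"

definition k_regular_bipartite :: "nat \<Rightarrow> nat \<Rightarrow> (nat \<times> nat) set \<Rightarrow> bool" where
  "k_regular_bipartite n k E \<longleftrightarrow>
     E \<subseteq> {..<n} \<times> {..<n} \<and>
     (\<forall>x<n. card {y. (x, y) \<in> E} = k) \<and>
     (\<forall>y<n. card {x. (x, y) \<in> E} = k)"

definition is_cut :: "nat \<Rightarrow> nat set \<Rightarrow> nat set \<Rightarrow> bool" where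
  "is_cut n S T \<longleftrightarrow> S \<subseteq> {..<n} \<and> T \<subseteq> {..<n}"

definition cross_edge :: "nat set \<Rightarrow> nat set \<Rightarrow> nat \<times> nat \<Rightarrow> bool" where
  "cross_edge S T e \<longleftrightarrow> (fst e \<in> S \<and> snd e \<notin> T) \<or> (fst e \<notin> S \<and> snd e \<in> T)"

fun incident :: "vertex \<Rightarrow> nat \<times> nat \<Rightarrow> bool" where
  "incident (Inl x) e \<longleftrightarrow> fst e = x"
| "incident (Inr y) e \<longleftrightarrow> snd e = y"

definition cross_deg :: "nat set \<Rightarrow> nat set \<Rightarrow> (nat \<times> nat) set \<Rightarrow> vertex \<Rightarrow> nat" where
  "cross_deg S T H v = card {e \<in> H. cross_edge S T e \<and> incident v e}"

definition Gamma :: "nat \<Rightarrow> nat \<Rightarrow> (nat \<times> nat) set \<Rightarrow> nat set \<Rightarrow> nat set \<Rightarrow> vertex set" where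
  "Gamma n k E S T = {v \<in> bip_vertices n. real (cross_deg S T E v) \<ge> real n powr (-1/20) * real k}"

text \<open>Probability that the random subgraph G(p) (each edge of E kept independently
  with probability p) has property P, where P is a property of the retained edge set.\<close>
definition subgraph_prob :: "(nat \<times> nat) set \<Rightarrow> real \<Rightarrow> ((nat \<times> nat) set \<Rightarrow> bool) \<Rightarrow> real" where
  "subgraph_prob E p P =
     measure_pmf.prob (Pi_pmf E False (\<lambda>_. bernoulli_pmf p)) {f. P {e \<in> E. f e}}"

end

theory Submission
  imports Defs "HOL-Real_Asymp.Real_Asymp"
begin

text \<open>A vertex outside \<open>\<Gamma>(S,T)\<close> has fewer than n^(-1/20) k cross edges, each retained
  with probability p \<le> ln n / k. A union bound over the 31-element sets of these edges shows
  that more than 30 of them survive with probability at most (n^(-1/20) k p)^31 \<le>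
  (n^(-1/20) ln n)^31, and a second union bound over the 2n vertices gives
  2n (n^(-1/20) ln n)^31 \<le> n^(-1/2).\<close>

lemma prob_Pi_bernoulli_all_True:
  assumes "finite E" "A \<subseteq> E" "0 \<le> p" "p \<le> 1"
  shows "measure_pmf.prob (Pi_pmf E False (\<lambda>_. bernoulli_pmf p)) {f. \<forall>e\<in>A. f e} = p ^ card A"
proof -
  have event: "{f. \<forall>e\<in>A. f e} = Pi E (\<lambda>e. if e \<in> A then {True} else UNIV)"
    using assms(2) by (auto simp: Pi_def)
  have "measure_pmf.prob (Pi_pmf E False (\<lambda>_. bernoulli_pmf p)) {f. \<forall>e\<in>A. f e}
      = (\<Prod>e\<in>E. measure_pmf.prob (bernoulli_pmf p) (if e \<in> A then {True} else UNIV))"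
    unfolding event by (rule measure_Pi_pmf_Pi[OF assms(1)])
  also have "\<dots> = (\<Prod>e\<in>E. if e \<in> A then p else 1)"
    by (rule prod.cong) (auto simp: measure_pmf_single assms(3,4))
  also have "\<dots> = p ^ card A"
    using prod.If_cases[OF assms(1), of "\<lambda>e. e \<in> A" "\<lambda>_. p" "\<lambda>_. 1"] assms(2)
    by (simp add: Int_absorb1)
  finally show ?thesis .
qed

lemma prob_Pi_bernoulli_card_ge:
  assumes "finite E" "D \<subseteq> E" "0 \<le> p" "p \<le> 1"
  shows "measure_pmf.prob (Pi_pmf E False (\<lambda>_. bernoulli_pmf p)) {f. r \<le> card {e\<in>D. f e}}
         \<le> (real (card D) * p) ^ r"
proof -
  let ?M = "Pi_pmf E False (\<lambda>_. bernoulli_pmf p)"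
  let ?F = "{A. A \<subseteq> D \<and> card A = r}"
  have "finite D" using assms(1,2) finite_subset by blast
  have cover: "{f. r \<le> card {e\<in>D. f e}} \<subseteq> (\<Union>A\<in>?F. {f. \<forall>e\<in>A. f e})"
  proof
    fix f assume "f \<in> {f. r \<le> card {e\<in>D. f e}}"
    then have "r \<le> card {e\<in>D. f e}" by simp
    then obtain A where "A \<subseteq> {e\<in>D. f e}" "card A = r"
      by (rule obtain_subset_with_card_n)
    then show "f \<in> (\<Union>A\<in>?F. {f. \<forall>e\<in>A. f e})" by blast
  qed
  have "finite ?F" using \<open>finite D\<close> by (auto intro: finite_subset[of _ "Pow D"])
  have "measure_pmf.prob ?M {f. r \<le> card {e\<in>D. f e}}
      \<le> measure_pmf.prob ?M (\<Union>A\<in>?F. {f. \<forall>e\<in>A. f e})"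
    by (rule measure_pmf.finite_measure_mono[OF cover]) simp
  also have "\<dots> \<le> (\<Sum>A\<in>?F. measure_pmf.prob ?M {f. \<forall>e\<in>A. f e})"
    by (rule measure_pmf.finite_measure_subadditive_finite[OF \<open>finite ?F\<close>]) simp
  also have "\<dots> = (\<Sum>A\<in>?F. p ^ r)"
    using prob_Pi_bernoulli_all_True[OF assms(1) _ assms(3,4)] assms(2)
    by (intro sum.cong) auto
  also have "\<dots> = real (card D choose r) * p ^ r"
    using n_subsets[OF \<open>finite D\<close>, of r] by simp
  also have "\<dots> \<le> real (card D ^ r) * p ^ r"
  proof (rule mult_right_mono)
    show "real (card D choose r) \<le> real (card D ^ r)"
      by (cases "r \<le> card D") (auto simp: binomial_le_pow binomial_eq_0)
  qed (use assms(3) in simp)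
  also have "\<dots> = (real (card D) * p) ^ r" by (simp add: power_mult_distrib)
  finally show ?thesis .
qed

lemma card_bip_vertices: "card (bip_vertices n) = 2 * n"
  unfolding bip_vertices_def by (subst card_Un_disjoint) (auto simp: card_image)

lemma finite_bip_vertices: "finite (bip_vertices n)"
  unfolding bip_vertices_def by simp

lemma cross_deg_kept:
  "cross_deg S T {e \<in> E. f e} v = card {e \<in> {e \<in> E. cross_edge S T e \<and> incident v e}. f e}"
  unfolding cross_deg_def by (rule arg_cong[where f = card]) auto

lemma subgraph_prob_exists_cross_deg_ge:
  assumes "finite E" "finite V" "0 \<le> p" "p \<le> 1"
    and small: "\<And>v. v \<in> V \<Longrightarrow> real (cross_deg S T E v) * p \<le> q"
  shows "subgraph_prob E p (\<lambda>H. \<exists>v\<in>V. r \<le> cross_deg S T H v) \<le> real (card V) * q ^ r"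
proof -
  let ?M = "Pi_pmf E False (\<lambda>_. bernoulli_pmf p)"
  let ?D = "\<lambda>v. {e \<in> E. cross_edge S T e \<and> incident v e}"
  have event: "{f. \<exists>v\<in>V. r \<le> cross_deg S T {e \<in> E. f e} v}
      = (\<Union>v\<in>V. {f. r \<le> card {e \<in> ?D v. f e}})"
    unfolding cross_deg_kept by blast
  have "subgraph_prob E p (\<lambda>H. \<exists>v\<in>V. r \<le> cross_deg S T H v)
      \<le> (\<Sum>v\<in>V. measure_pmf.prob ?M {f. r \<le> card {e \<in> ?D v. f e}})"
    unfolding subgraph_prob_def event
    by (rule measure_pmf.finite_measure_subadditive_finite[OF assms(2)]) simp
  also have "\<dots> \<le> (\<Sum>v\<in>V. q ^ r)"
  proof (rule sum_mono)
    fix v assume "v \<in> V"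
    have "?D v \<subseteq> E" by blast
    then have "measure_pmf.prob ?M {f. r \<le> card {e \<in> ?D v. f e}} \<le> (real (card (?D v)) * p) ^ r"
      by (rule prob_Pi_bernoulli_card_ge[OF assms(1) _ assms(3,4)])
    also have "\<dots> \<le> q ^ r"
      using small[OF \<open>v \<in> V\<close>] assms(3) by (intro power_mono) (simp_all add: cross_deg_def)
    finally show "measure_pmf.prob ?M {f. r \<le> card {e \<in> ?D v. f e}} \<le> q ^ r" .
  qed
  finally show ?thesis by simp
qed

lemma subgraph_prob_low_cross_deg_vertex_ge:
  assumes "finite E" "0 \<le> p" "p \<le> 1" "p * real k \<le> L"
  shows "subgraph_prob E p (\<lambda>H. \<exists>v \<in> bip_vertices n - Gamma n k E S T. r \<le> cross_deg S T H v)
         \<le> 2 * real n * (real n powr (-1/20) * L) ^ r"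
proof -
  let ?V = "bip_vertices n - Gamma n k E S T"
  let ?q = "real n powr (-1/20) * L"
  have small: "real (cross_deg S T E v) * p \<le> ?q" if "v \<in> ?V" for v
  proof -
    have "real (cross_deg S T E v) < real n powr (-1/20) * real k"
      using that by (simp add: Gamma_def not_le)
    then have "real (cross_deg S T E v) * p \<le> real n powr (-1/20) * real k * p"
      using assms(2) by (intro mult_right_mono) simp_all
    also have "\<dots> \<le> ?q"
      using mult_left_mono[OF assms(4), of "real n powr (-1/20)"] by (simp add: ac_simps)
    finally show ?thesis .
  qed
  have "subgraph_prob E p (\<lambda>H. \<exists>v\<in>?V. r \<le> cross_deg S T H v) \<le> real (card ?V) * ?q ^ r"
    by (rule subgraph_prob_exists_cross_deg_ge[OF assms(1) _ assms(2,3) small])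
      (simp add: finite_bip_vertices)
  also have "\<dots> \<le> 2 * real n * ?q ^ r"
  proof (rule mult_right_mono)
    have "card ?V \<le> card (bip_vertices n)" by (rule card_mono[OF finite_bip_vertices]) blast
    then show "real (card ?V) \<le> 2 * real n" by (simp add: card_bip_vertices)
    have "0 \<le> L" using assms(2,4) by (meson mult_nonneg_nonneg of_nat_0_le_iff order_trans)
    then show "0 \<le> ?q ^ r" by simp
  qed
  finally show ?thesis .
qed

lemma eventually_ln_le_of_smallomega:
  fixes k :: "nat \<Rightarrow> nat"
  assumes "(\<lambda>n. real (k n) / real n) \<in> \<omega>(\<lambda>n. ln (real n) powr (-1/3))"
  shows "\<forall>\<^sub>F n in at_top. ln (real n) \<le> real (k n)"
proof -
  have "\<forall>\<^sub>F n in at_top. norm (real (k n) / real n) \<ge> 1 * norm (ln (real n) powr (-1/3))"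
    using assms by (rule smallomegaD)
  moreover have "\<forall>\<^sub>F n::nat in at_top. ln (real n) \<le> real n * ln (real n) powr (-1/3)"
    by real_asymp
  moreover have "\<forall>\<^sub>F n::nat in at_top. 0 < n" by (rule eventually_gt_at_top)
  ultimately show ?thesis
  proof eventually_elim
    case (elim n)
    then have "real n * ln (real n) powr (-1/3) \<le> real (k n)" by (simp add: field_simps)
    with elim(2) show ?case by linarith
  qed
qed

lemma subgraph_prob_low_cross_deg_vertex_gt_30:
  assumes "finite E" "0 \<le> a" "a \<le> ln (real n)" "ln (real n) \<le> real k"
  shows "subgraph_prob E ((ln (real n) - a) / real k)
           (\<lambda>H. \<exists>x \<in> bip_vertices n - Gamma n k E S T. cross_deg S T H x > 30)
         \<le> 2 * real n * (real n powr (-1/20) * ln (real n)) ^ 31"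
proof -
  have "0 \<le> (ln (real n) - a) / real k" "(ln (real n) - a) / real k \<le> 1"
    "(ln (real n) - a) / real k * real k \<le> ln (real n)"
    using assms(2-4) by (auto simp: divide_le_eq)
  from subgraph_prob_low_cross_deg_vertex_ge[OF assms(1) this, of n S T 31]
  show ?thesis by (simp add: Suc_le_eq[of 30, simplified])
qed

theorem lemma3p4:
  fixes k :: "nat \<Rightarrow> nat"
    and E :: "nat \<Rightarrow> (nat \<times> nat) set"
    and S T :: "nat \<Rightarrow> nat set"
  assumes delta: "(\<lambda>n. real (k n) / real n) \<in> \<omega>(\<lambda>n. ln (real n) powr (-1/3))"
    and reg: "\<And>n. k_regular_bipartite n (k n) (E n)"
    and cut: "\<And>n. is_cut n (S n) (T n)"
  shows "\<exists>c>0. \<forall>\<^sub>F n in at_top.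
           subgraph_prob (E n) ((ln (real n) - ln (ln (ln (ln (real n))))) / real (k n))
             (\<lambda>H. \<exists>x \<in> bip_vertices n - Gamma n (k n) (E n) (S n) (T n).
                     cross_deg (S n) (T n) H x > 30)
           \<le> real n powr (-c)"
proof -
  have "\<forall>\<^sub>F n::nat in at_top. 0 \<le> ln (ln (ln (ln (real n))))" by real_asymp
  moreover have "\<forall>\<^sub>F n::nat in at_top. ln (ln (ln (ln (real n)))) \<le> ln (real n)" by real_asymp
  moreover have "\<forall>\<^sub>F n::nat in at_top.
      2 * real n * (real n powr (-1/20) * ln (real n)) ^ 31 \<le> real n powr (-(1/2))"
    by real_asymp
  moreover note eventually_ln_le_of_smallomega[OF delta]
  ultimately have "\<forall>\<^sub>F n in at_top. 0 \<le> ln (ln (ln (ln (real n))))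
      \<and> ln (ln (ln (ln (real n)))) \<le> ln (real n) \<and> ln (real n) \<le> real (k n)
      \<and> 2 * real n * (real n powr (-1/20) * ln (real n)) ^ 31 \<le> real n powr (-(1/2))"
    by eventually_elim blast
  moreover have "finite (E n)" for n
    using reg[of n] by (auto simp: k_regular_bipartite_def intro: finite_subset)
  ultimately show ?thesis
    by (intro exI[of _ "1/2"] conjI, simp) (auto elim!: eventually_mono
        intro!: order_trans[OF subgraph_prob_low_cross_deg_vertex_gt_30])
qed

end
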